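(* Assume GCH. Let $\lambda<\kappa$ be cardinals with $\mathrm{cf}(\kappa)\notin\{\mu^+ : \mathrm{cf}(\mu)=\omega\}$ and $\mathrm{cf}(\kappa)>\lambda>\aleph_0$. Then every $(\lambda,\kappa)$-graph contains a $(\lambda',\kappa)$-subgraph for some cardinal $\lambda'<\lambda$.
   Context: For infinite cardinals $\lambda<\kappa$, a $(\lambda,\kappa)$-graph is a bipartite graph with bipartition $(A,B)$, $|A|=\lambda$, $|B|=\kappa$, in which every vertex $b\in B$ has infinitely many neighbours in $A$. A $(\lambda',\kappa)$-subgraph of such a graph is a subgraph with bipartition $(C,D)$, $C\subseteq A$, $D\subseteq B$, which is itself a $(\lambda',\kappa)$-graph. *)

theory Defs
  imports Main "HOL-Library.Countable_Set"
begin

unbundle cardinal_syntax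

definition lk_graph :: "'a set \<Rightarrow> 'b set \<Rightarrow> ('a \<times> 'b) set \<Rightarrow> bool" where
  "lk_graph A B E \<longleftrightarrow> infinite A \<and> (card_of A) <o (card_of B) \<and> E \<subseteq> A \<times> B \<and>
     (\<forall>b\<in>B. infinite {a\<in>A. (a, b) \<in> E})"

definition is_cof :: "'b set \<Rightarrow> 'c rel \<Rightarrow> bool" where
  "is_cof X r \<longleftrightarrow> (\<exists>K\<subseteq>X. cofinal K (card_of X) \<and> (card_of K) =o r) \<and>
     (\<forall>K\<subseteq>X. cofinal K (card_of X) \<longrightarrow> r \<le>o (card_of K))"

definition countable_cof :: "'b set \<Rightarrow> bool" where
  "countable_cof X \<longleftrightarrow> infinite X \<and> (\<exists>K\<subseteq>X. cofinal K (card_of X) \<and> countable K)"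

text \<open>GCH, as far as it can be expressed for cardinals realised in the type 'b set set:
  for infinite X, no cardinal lies strictly between (card_of X) and 2^(card_of X).\<close>
definition GCH_on :: "'b itself \<Rightarrow> bool" where
  "GCH_on _ \<longleftrightarrow> (\<forall>(X::'b set) (Y::'b set set). infinite X \<and> (card_of X) <o (card_of Y) \<longrightarrow> (card_of (Pow X)) \<le>o (card_of Y))"

end

theory Submission
  imports Defs "HOL-Library.Countable_Set_Type"
begin

(* Let \<lambda> = |A| and \<kappa> = |B|. It suffices to cover B by fewer than cf \<kappa> classes, each class
   attached to a subset of A of size < \<lambda> in which all its members have infinitely many
   neighbours: since there are fewer than cf \<kappa> classes, one of them has size \<kappa>, and it spans
   the required subgraph.
   If cf \<lambda> > \<omega>, a countably infinite set of neighbours of b is bounded by some a \<in> A, so b has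
   infinitely many neighbours below a; the initial segments of A are \<lambda> < cf \<kappa> many classes.
   If cf \<lambda> = \<omega>, GCH gives 2^\<lambda> = \<lambda>^+, which lies below cf \<kappa> because cf \<kappa> > \<lambda> and
   cf \<kappa> \<noteq> \<lambda>^+; the countable subsets of A, at most 2^\<lambda> many, serve as classes. *)

lemma countable_ordLess_uncountable:
  assumes "countable C" and "uncountable A"
  shows "|C| <o |A|"
  using assms countable_ordLeq not_ordLess_iff_ordLeq[OF card_of_Well_order card_of_Well_order]
  by blast

lemma finite_card_of_ordLess_infinite:
  assumes "finite P" and "infinite X"
  shows "|P| <o |X|"
  using finite_ordLess_infinite[OF card_of_Well_order card_of_Well_order] assms
  by (simp add: Field_card_of)

lemma card_of_Times_ordLeq_infinite_factor:
  assumes "infinite P" and "|Q| \<le>o |P|"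
  shows "|P \<times> Q| \<le>o |P|" and "|Q \<times> P| \<le>o |P|"
  using card_of_Times_ordLeq_infinite_Field[of "|P|" P Q]
    card_of_Times_ordLeq_infinite_Field[of "|P|" Q P] assms ordLeq_reflexive[OF card_of_Well_order] card_of_Card_order
  unfolding Field_card_of by blast+

lemma card_of_Times_ordLess_infinite:
  assumes X: "infinite X" and P: "|P| <o |X|" and Q: "|Q| <o |X|"
  shows "|P \<times> Q| <o |X|"
proof (cases "finite P \<and> finite Q")
  case True
  then have "finite (P \<times> Q)" by simp
  then show ?thesis using X by (rule finite_card_of_ordLess_infinite)
next
  case infinite: False
  consider "|Q| \<le>o |P|" | "|P| \<le>o |Q|"
    using ordLeq_total[OF card_of_Well_order card_of_Well_order] by blast
  then have "|P \<times> Q| \<le>o |P| \<or> |P \<times> Q| \<le>o |Q|"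
  proof cases
    case 1
    then have "infinite P" using infinite card_of_ordLeq_finite by blast
    with 1 show ?thesis using card_of_Times_ordLeq_infinite_factor(1) by blast
  next
    case 2
    then have "infinite Q" using infinite card_of_ordLeq_finite by blast
    with 2 show ?thesis using card_of_Times_ordLeq_infinite_factor(2) by blast
  qed
  then show ?thesis using ordLeq_ordLess_trans[OF _ P] ordLeq_ordLess_trans[OF _ Q] by blast
qed

lemma cofinal_card_of_self:
  assumes "infinite X"
  shows "cofinal X (card_of X)"
  using infinite_Card_order_limit[OF card_of_Card_order, of X] assms
  unfolding cofinal_def Field_card_of by blast

lemma not_cofinal_card_of_bounded:
  assumes "\<not> cofinal K (card_of X)" and "K \<subseteq> X"
  obtains a where "a \<in> X" and "\<And>k. k \<in> K \<Longrightarrow> (k, a) \<in> card_of X"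
proof -
  obtain a where a: "a \<in> X" and above: "\<forall>k\<in>K. \<not> (a \<noteq> k \<and> (a, k) \<in> card_of X)"
    using assms(1) unfolding cofinal_def Field_card_of by blast
  have "(k, a) \<in> card_of X" if "k \<in> K" for k
    using wo_rel.in_notinI[of "card_of X" a k] above that a assms(2) card_of_Well_order
    unfolding wo_rel_def Field_card_of by blast
  with a show thesis using that by blast
qed

lemma card_of_ordLess_underS:
  assumes "|Y| <o |X|"
  obtains a where "a \<in> X" and "|Y| \<le>o |underS (card_of X) a|"
proof -
  have wo: "Well_order (card_of X)" by (rule card_of_Well_order)
  from assms obtain a where a: "a \<in> Field (card_of X)"
    and iso: "|Y| =o Restr (card_of X) (underS (card_of X) a)"
    unfolding ordLess_iff_ordIso_Restr[OF wo card_of_Well_order] by blast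
  have F: "Field (Restr (card_of X) (underS (card_of X) a)) = underS (card_of X) a"
    by (rule Field_Restr_ofilter[OF wo wo_rel.underS_ofilter]) (simp add: wo_rel_def wo)
  have "|Field |Y|| \<le>o |Field (Restr (card_of X) (underS (card_of X) a))|"
    by (rule card_of_mono2[OF ordIso_imp_ordLeq[OF iso]])
  then have "|Y| \<le>o |underS (card_of X) a|" unfolding F Field_card_of .
  with a show thesis using that unfolding Field_card_of by blast
qed

lemma cofinal_subset_of_small_cover:
  assumes inf: "infinite X" and cover: "X \<subseteq> (\<Union>i\<in>I. Y i)" and I: "|I| <o |X|"
    and Y: "\<And>i. i \<in> I \<Longrightarrow> |Y i| <o |X|"
  obtains K where "K \<subseteq> X" and "cofinal K (card_of X)" and "|K| \<le>o |I|"
proof -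
  have "\<forall>i\<in>I. \<exists>x. x \<in> X \<and> |Y i| \<le>o |underS (card_of X) x|"
  proof
    fix i assume "i \<in> I"
    from card_of_ordLess_underS[OF Y[OF this]]
    show "\<exists>x. x \<in> X \<and> |Y i| \<le>o |underS (card_of X) x|" by blast
  qed
  then obtain x where x: "\<forall>i\<in>I. x i \<in> X \<and> |Y i| \<le>o |underS (card_of X) (x i)|"
    by (rule bchoice[THEN exE])
  have "cofinal (x ` I) (card_of X)"
    \<comment> \<open>otherwise all x i lie below some a, and X injects into the smaller set I \<times> underS a\<close>
  proof (rule ccontr)
    assume "\<not> cofinal (x ` I) (card_of X)"
    moreover have "x ` I \<subseteq> X" using x by blast
    ultimately obtain a where a: "a \<in> X" and bound: "\<And>i. i \<in> I \<Longrightarrow> (x i, a) \<in> card_of X"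
      by (rule not_cofinal_card_of_bounded) blast
    have trans_antisym: "trans (card_of X)" "antisym (card_of X)"
      using card_of_Well_order[of X]
      unfolding well_order_on_def linear_order_on_def partial_order_on_def preorder_on_def
      by auto
    have "|Y i| \<le>o |underS (card_of X) a|" if "i \<in> I" for i
    proof -
      have "|underS (card_of X) (x i)| \<le>o |underS (card_of X) a|"
        by (rule card_of_mono1[OF underS_incr[OF trans_antisym bound[OF that]]])
      with x that show ?thesis using ordLeq_transitive by blast
    qed
    then have "|SIGMA i:I. Y i| \<le>o |I \<times> underS (card_of X) a|"
      by (rule card_of_Sigma_mono1[rule_format])
    then have X_le: "|X| \<le>o |I \<times> underS (card_of X) a|"
      using ordLeq_transitive[OF card_of_mono1[OF cover] card_of_UNION_Sigma] ordLeq_transitive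
      by blast
    have "|underS (card_of X) a| <o |X|"
      using card_of_underS[OF card_of_Card_order, of a X] a by (simp add: Field_card_of)
    then have "|I \<times> underS (card_of X) a| <o |X|"
      by (rule card_of_Times_ordLess_infinite[OF inf I])
    with X_le show False using not_ordLess_ordLeq by blast
  qed
  moreover have "x ` I \<subseteq> X" using x by blast
  ultimately show thesis using that[OF _ _ card_of_image] by blast
qed

lemma large_piece_of_small_cover:
  assumes inf: "infinite X" and cover: "X \<subseteq> (\<Union>i\<in>I. Y i)"
    and pieces: "\<And>i. i \<in> I \<Longrightarrow> Y i \<subseteq> X"
    and small: "\<And>K. K \<subseteq> X \<Longrightarrow> cofinal K (card_of X) \<Longrightarrow> |I| <o |K|"
  shows "\<exists>i\<in>I. |Y i| =o |X|"
proof (rule ccontr)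
  assume "\<not> ?thesis"
  then have "|Y i| <o |X|" if "i \<in> I" for i
    using card_of_mono1[OF pieces[OF that]] that ordLeq_iff_ordLess_or_ordIso by blast
  moreover have "|I| <o |X|" by (rule small[OF subset_refl cofinal_card_of_self[OF inf]])
  ultimately obtain K where "K \<subseteq> X" "cofinal K (card_of X)" "|K| \<le>o |I|"
    using cofinal_subset_of_small_cover[OF inf cover] by blast
  then show False using small not_ordLess_ordLeq by blast
qed

lemma cofinal_subset_card_of_ordIso:
  assumes iso: "|A| =o |M|" and inf: "infinite A"
    and K: "K \<subseteq> A" "cofinal K (card_of A)" "|K| <o |A|"
  obtains L where "L \<subseteq> M" and "cofinal L (card_of M)" and "|L| \<le>o |K|"
proof -
  obtain f where f: "bij_betw f A M" using iso card_of_ordIso by blast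
  have "M \<subseteq> (\<Union>k\<in>K. f ` underS (card_of A) k)"
  proof
    fix y assume "y \<in> M"
    then obtain x where x: "x \<in> A" "y = f x" using f unfolding bij_betw_def by blast
    then obtain k where "k \<in> K" "x \<noteq> k" "(x, k) \<in> card_of A"
      using K(2) unfolding cofinal_def Field_card_of by blast
    with x show "y \<in> (\<Union>k\<in>K. f ` underS (card_of A) k)" unfolding underS_def by blast
  qed
  moreover have "|f ` underS (card_of A) k| <o |M|" if "k \<in> K" for k
  proof -
    have "|underS (card_of A) k| <o |A|"
      using card_of_underS[OF card_of_Card_order, of k A] K(1) that by (auto simp: Field_card_of)
    then show ?thesis
      using ordLeq_ordLess_trans[OF card_of_image] ordLess_ordIso_trans[OF _ iso] by blast
  qed
  moreover have "infinite M" using f inf bij_betw_finite by blast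
  moreover have "|K| <o |M|" using ordLess_ordIso_trans[OF K(3) iso] .
  ultimately show thesis using that cofinal_subset_of_small_cover by blast
qed

lemma GCH_on_Pow_ordLeq_cardSuc:
  fixes M :: "'b set"
  assumes "GCH_on TYPE('b)" and "infinite M"
  shows "|Pow M| \<le>o cardSuc (card_of M)"
proof -
  have F: "|Field (cardSuc (card_of M))| =o cardSuc (card_of M)"
    by (rule card_of_Field_ordIso[OF cardSuc_Card_order[OF card_of_Card_order]])
  have "|M| <o |Field (cardSuc (card_of M))|"
    by (rule ordLess_ordIso_trans[OF cardSuc_greater[OF card_of_Card_order] ordIso_symmetric[OF F]])
  then have "|Pow M| \<le>o |Field (cardSuc (card_of M))|" using assms unfolding GCH_on_def by blast
  then show ?thesis by (rule ordLeq_ordIso_trans[OF _ F])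
qed

lemma Pow_ordLess_cofinal_subset:
  fixes A :: "'a set" and B :: "'b set"
  assumes gch: "GCH_on TYPE('b)" and AB: "|A| \<le>o |B|" and unc: "uncountable A"
    and K0: "K0 \<subseteq> A" "cofinal K0 (card_of A)" "countable K0"
    and cf_gt: "\<forall>K\<subseteq>B. cofinal K (card_of B) \<longrightarrow> |A| <o |K|"
    and cf_not_succ: "\<not> (\<exists>M::'b set. countable_cof M \<and> is_cof B (cardSuc (card_of M)))"
    and K: "K \<subseteq> B" "cofinal K (card_of B)"
  shows "|Pow A| <o |K|"
proof -
  \<comment> \<open>GCH_on only speaks about subsets of 'b, so A is replaced by a copy M inside B\<close>
  obtain f where f: "inj_on f A" "f ` A \<subseteq> B" using AB unfolding card_of_ordLeq[symmetric] by blast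
  define M where "M = f ` A"
  have bij: "bij_betw f A M" unfolding M_def using f(1) by (rule inj_on_imp_bij_betw)
  then have AM: "|A| =o |M|" using card_of_ordIso by blast
  have infA: "infinite A" using unc countable_finite by blast
  then have infM: "infinite M" using bij bij_betw_finite by blast
  obtain L where L: "L \<subseteq> M" "cofinal L (card_of M)" "|L| \<le>o |K0|"
    by (rule cofinal_subset_card_of_ordIso[OF AM infA K0(1,2)
          countable_ordLess_uncountable[OF K0(3) unc]])
  have cof_M: "countable_cof M"
    unfolding countable_cof_def using L infM countable_ordLeq[OF L(3) K0(3)] by blast
  have succ_le: "cardSuc (card_of M) \<le>o |K'|" if "K' \<subseteq> B" "cofinal K' (card_of B)" for K'
  proof -
    have "|M| <o |K'|" using cf_gt that ordIso_ordLess_trans[OF ordIso_symmetric[OF AM]] by blast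
    then show ?thesis using cardSuc_ordLess_ordLeq[OF card_of_Card_order card_of_Card_order] by blast
  qed
  show ?thesis
  proof (rule ccontr)
    assume "\<not> ?thesis"
    then have "|K| \<le>o |Pow A|"
      using not_ordLess_iff_ordLeq[OF card_of_Well_order card_of_Well_order] by blast
    also have "|Pow A| =o |Pow M|" using bij_betw_Pow[OF bij] card_of_ordIso by blast
    also have "|Pow M| \<le>o cardSuc (card_of M)" by (rule GCH_on_Pow_ordLeq_cardSuc[OF gch infM])
    finally have "|K| =o cardSuc (card_of M)"
      using succ_le[OF K] ordIso_iff_ordLeq by blast
    then have "is_cof B (cardSuc (card_of M))" unfolding is_cof_def using K succ_le by blast
    with cof_M cf_not_succ show False by blast
  qed
qed

lemma infinite_Int_underS_of_uncountable_cof: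
  assumes no_countable_cofinal: "\<not> (\<exists>K\<subseteq>A. cofinal K (card_of A) \<and> countable K)"
    and S: "S \<subseteq> A" "infinite S"
  obtains a where "a \<in> A" and "infinite (S \<inter> underS (card_of A) a)"
proof -
  obtain N where N: "N \<subseteq> S" "countable N" "infinite N"
    using infinite_countable_subset'[OF S(2)] by blast
  then have "\<not> cofinal N (card_of A)" using no_countable_cofinal S(1) by blast
  then obtain a where a: "a \<in> A" and bound: "\<And>k. k \<in> N \<Longrightarrow> (k, a) \<in> card_of A"
    using not_cofinal_card_of_bounded N(1) S(1) by blast
  have "N - {a} \<subseteq> S \<inter> underS (card_of A) a" using N(1) bound unfolding underS_def by blast
  moreover have "infinite (N - {a})" using N(3) by simp
  ultimately show thesis using that a finite_subset by blast
qed

lemma lk_graph_Int_Times: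
  assumes graph: "lk_graph A B E" and C: "|C| <o |A|" and D: "|D| =o |B|"
    and nbrs: "\<And>b. b \<in> D \<Longrightarrow> infinite {a\<in>C. (a, b) \<in> E}"
  shows "lk_graph C D (E \<inter> C \<times> D)"
proof -
  have AB: "|A| <o |B|" and "infinite A" using graph unfolding lk_graph_def by auto
  then have "infinite B" using card_of_ordLeq_finite ordLess_imp_ordLeq by blast
  then obtain b where "b \<in> D" using card_of_ordIso_finite[OF D] by fastforce
  then have "infinite C" using nbrs infinite_super[of "{a\<in>C. (a, b) \<in> E}" C] by blast
  moreover have "|C| <o |D|"
    by (rule ordLess_ordIso_trans[OF ordLess_transitive[OF C AB] ordIso_symmetric[OF D]])
  moreover have "{a\<in>C. (a, b) \<in> E \<inter> C \<times> D} = {a\<in>C. (a, b) \<in> E}" if "b \<in> D" for b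
    using that by blast
  ultimately show ?thesis unfolding lk_graph_def using nbrs by auto
qed

lemma lk_subgraph_of_small_cover:
  fixes A :: "'a set" and B :: "'b set" and \<C> :: "'a set set"
  assumes graph: "lk_graph A B E"
    and \<C>: "\<And>C. C \<in> \<C> \<Longrightarrow> C \<subseteq> A \<and> |C| <o |A|"
    and cover: "\<And>b. b \<in> B \<Longrightarrow> \<exists>C\<in>\<C>. infinite {a\<in>C. (a, b) \<in> E}"
    and small: "\<And>K. K \<subseteq> B \<Longrightarrow> cofinal K (card_of B) \<Longrightarrow> |\<C>| <o |K|"
  shows "\<exists>C D F. C \<subseteq> A \<and> D \<subseteq> B \<and> F \<subseteq> E \<inter> (C \<times> D) \<and> lk_graph C D F
           \<and> (card_of D) =o (card_of B) \<and> (card_of C) <o (card_of A)"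
proof -
  define D where "D C = {b\<in>B. infinite {a\<in>C. (a, b) \<in> E}}" for C
  have "|A| <o |B|" and "infinite A" using graph unfolding lk_graph_def by auto
  then have "infinite B" using card_of_ordLeq_finite ordLess_imp_ordLeq by blast
  moreover have "B \<subseteq> (\<Union>C\<in>\<C>. D C)" using cover unfolding D_def by blast
  moreover have "D C \<subseteq> B" for C unfolding D_def by blast
  ultimately obtain C where "C \<in> \<C>" and D_large: "|D C| =o |B|"
    using large_piece_of_small_cover[where X=B and I=\<C> and Y=D] small by blast
  moreover have "lk_graph C (D C) (E \<inter> C \<times> D C)"
    using lk_graph_Int_Times[OF graph _ D_large] \<C>[OF \<open>C \<in> \<C>\<close>] unfolding D_def by blast
  ultimately show ?thesis using \<C> \<open>D C \<subseteq> B\<close> by blast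
qed

lemma lk_subgraph_of_uncountable_cof:
  fixes A :: "'a set" and B :: "'b set"
  assumes graph: "lk_graph A B E"
    and no_countable_cofinal: "\<not> (\<exists>K\<subseteq>A. cofinal K (card_of A) \<and> countable K)"
    and cf_gt: "\<forall>K\<subseteq>B. cofinal K (card_of B) \<longrightarrow> |A| <o |K|"
  shows "\<exists>C D F. C \<subseteq> A \<and> D \<subseteq> B \<and> F \<subseteq> E \<inter> (C \<times> D) \<and> lk_graph C D F
           \<and> (card_of D) =o (card_of B) \<and> (card_of C) <o (card_of A)"
proof (rule lk_subgraph_of_small_cover[OF graph, where \<C> = "underS (card_of A) ` A"])
  fix C assume "C \<in> underS (card_of A) ` A"
  then obtain a where "a \<in> A" and "C = underS (card_of A) a" by blast
  then show "C \<subseteq> A \<and> |C| <o |A|"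
    using Order_Relation.underS_Field[of "card_of A" a]
      card_of_underS[OF card_of_Card_order, of a A] by (simp add: Field_card_of)
next
  fix b assume "b \<in> B"
  then have nbrs: "infinite {x\<in>A. (x, b) \<in> E}" using graph unfolding lk_graph_def by blast
  obtain a where a: "a \<in> A" and "infinite ({x\<in>A. (x, b) \<in> E} \<inter> underS (card_of A) a)"
    by (rule infinite_Int_underS_of_uncountable_cof[OF no_countable_cofinal _ nbrs]) blast
  moreover have "{x\<in>A. (x, b) \<in> E} \<inter> underS (card_of A) a
      = {x\<in>underS (card_of A) a. (x, b) \<in> E}"
    using Order_Relation.underS_Field[of "card_of A" a] by (auto simp: Field_card_of)
  ultimately have "infinite {x\<in>underS (card_of A) a. (x, b) \<in> E}" by simp
  with a show "\<exists>C\<in>underS (card_of A) ` A. infinite {x\<in>C. (x, b) \<in> E}" by blast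
next
  fix K assume "K \<subseteq> B" "cofinal K (card_of B)"
  with cf_gt have "|A| <o |K|" by blast
  then show "|underS (card_of A) ` A| <o |K|" by (rule ordLeq_ordLess_trans[OF card_of_image])
qed

lemma lk_subgraph_of_countable_cof:
  fixes A :: "'a set" and B :: "'b set"
  assumes gch: "GCH_on TYPE('b)" and graph: "lk_graph A B E" and unc: "uncountable A"
    and K0: "K0 \<subseteq> A" "cofinal K0 (card_of A)" "countable K0"
    and cf_gt: "\<forall>K\<subseteq>B. cofinal K (card_of B) \<longrightarrow> |A| <o |K|"
    and cf_not_succ: "\<not> (\<exists>M::'b set. countable_cof M \<and> is_cof B (cardSuc (card_of M)))"
  shows "\<exists>C D F. C \<subseteq> A \<and> D \<subseteq> B \<and> F \<subseteq> E \<inter> (C \<times> D) \<and> lk_graph C D F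
           \<and> (card_of D) =o (card_of B) \<and> (card_of C) <o (card_of A)"
proof (rule lk_subgraph_of_small_cover[OF graph, where \<C> = "{S. S \<subseteq> A \<and> countable S}"])
  fix C assume "C \<in> {S. S \<subseteq> A \<and> countable S}"
  then show "C \<subseteq> A \<and> |C| <o |A|" using countable_ordLess_uncountable[OF _ unc] by blast
next
  fix b assume "b \<in> B"
  then have "infinite {a\<in>A. (a, b) \<in> E}" using graph unfolding lk_graph_def by blast
  then obtain N where N: "N \<subseteq> {a\<in>A. (a, b) \<in> E}" "countable N" "infinite N"
    using infinite_countable_subset' by blast
  then have "{x\<in>N. (x, b) \<in> E} = N" by blast
  with N show "\<exists>C\<in>{S. S \<subseteq> A \<and> countable S}. infinite {x\<in>C. (x, b) \<in> E}" by auto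
next
  fix K assume K: "K \<subseteq> B" "cofinal K (card_of B)"
  have "|{S. S \<subseteq> A \<and> countable S}| \<le>o |Pow A|" by (rule card_of_mono1) blast
  moreover have "|A| \<le>o |B|" using graph unfolding lk_graph_def by (blast intro: ordLess_imp_ordLeq)
  then have "|Pow A| <o |K|" by (rule Pow_ordLess_cofinal_subset[OF gch _ unc K0 cf_gt cf_not_succ K])
  ultimately show "|{S. S \<subseteq> A \<and> countable S}| <o |K|" by (rule ordLeq_ordLess_trans)
qed

theorem lemma4p3:
  fixes A :: "'a set" and B :: "'b set" and E :: "('a \<times> 'b) set"
  assumes gch: "GCH_on TYPE('b)"
    and graph: "lk_graph A B E"
    and lam_unc: "uncountable A"
    and cf_gt: "\<forall>K\<subseteq>B. cofinal K (card_of B) \<longrightarrow> (card_of A) <o (card_of K)"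
    and cf_not_succ: "\<not> (\<exists>M::'b set. countable_cof M \<and> is_cof B (cardSuc (card_of M)))"
  shows "\<exists>C D F. C \<subseteq> A \<and> D \<subseteq> B \<and> F \<subseteq> E \<inter> (C \<times> D) \<and> lk_graph C D F
           \<and> (card_of D) =o (card_of B) \<and> (card_of C) <o (card_of A)"
proof (cases "\<exists>K\<subseteq>A. cofinal K (card_of A) \<and> countable K")
  case True
  then obtain K0 where "K0 \<subseteq> A" "cofinal K0 (card_of A)" "countable K0" by blast
  then show ?thesis by (rule lk_subgraph_of_countable_cof[OF gch graph lam_unc _ _ _ cf_gt cf_not_succ])
next
  case False
  then show ?thesis by (rule lk_subgraph_of_uncountable_cof[OF graph _ cf_gt])
qed

end
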